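(* Let $1<a<b$ be coprime integers and let $D\subseteq G$ be a subdiagram. Then \[ Q(\mathbf{1}_D)=\mathtt{dinv}(D), \] where $\mathbf{1}_D\in\mathbb{R}^G$ is the indicator vector of $D$ (its $i$-th coordinate is $1$ if $i\in D$ and $0$ otherwise). Moreover, if $D\neq\varnothing$ then $Q(\mathbf{1}_D)>0$.
   Context: Fix coprime integers $1<a<b$. Work in the grid $\mathbb{Z}^2$, with $+x$ pointing east and $+y$ pointing north; elements of $\mathbb{Z}^2$ are called cells. Let $g:\mathbb{Z}^2\to\mathbb{Z}$, $g(x,y)=ab-ax-by$ (the value of the cell). For a cell $c=(x,y)$ and an integer $k$, write $c-ka:=(x+k,y)$ (the cell $k$ steps east) and $c-kb:=(x,y+k)$ (the cell $k$ steps north); thus $g(c-ka)=g(c)-ka$ and $g(c-kb)=g(c)-kb$. Let $G=\{(x,y)\in\mathbb{Z}_{\ge1}^2: g(x,y)>0\}$ ($g$ is injective on $G$). A subdiagram is a subset $D\subseteq G$ such that whenever $(x,y)\in D$, $(x',y')\in G$, $x'\le x$ and $y'\le y$, we have $(x',y')\in D$ (equivalently, $D$ is upward closed for the partial order $i\preceq j \iff g(j)-g(i)\in\{ma+nb: m,n\in\mathbb{Z}_{\ge0}\}$). Define $K:\mathbb{Z}\to\mathbb{Z}$ by $K(d)=\mathbf{1}_{d\ge0}-\mathbf{1}_{d\ge a}-\mathbf{1}_{d\ge b}+\mathbf{1}_{d\ge a+b}$ (equivalently $K(d)=\mathbf{1}_{0\le d<a}-\mathbf{1}_{b\le d<a+b}$),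 and the quadratic form on $\mathbb{R}^G$ \[ Q(\mathbf{n})=\sum_{i,j\in G}K\big(g(j)-g(i)\big)\,n_in_j,\qquad \mathbf{n}=(n_i)_{i\in G}. \] For a subdiagram $D$ and $c\in D$, let $\mathrm{arm}_D(c)=\max\{k\ge0: c-ka\in D\}$ and $\mathrm{leg}_D(c)=\max\{k\ge 0: c-kb\in D\}$. Define \[ \mathtt{dinv}(D)=\#\Big\{c\in D:\ \frac{\mathrm{leg}_D(c)}{\mathrm{arm}_D(c)+1}<\frac ab<\frac{\mathrm{leg}_D(c)+1}{\mathrm{arm}_D(c)}\Big\}, \] with the convention that $\frac{\mathrm{leg}_D(c)+1}{0}=+\infty$. *)

theory Defs
  imports "HOL-Analysis.Analysis"
begin

type_synonym cell = "int \<times> int"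

definition gval :: "int \<Rightarrow> int \<Rightarrow> cell \<Rightarrow> int" where
  "gval a b c = a * b - a * fst c - b * snd c"

definition Gset :: "int \<Rightarrow> int \<Rightarrow> cell set" where
  "Gset a b = {(x, y). x \<ge> 1 \<and> y \<ge> 1 \<and> gval a b (x, y) > 0}"

definition subdiagram :: "int \<Rightarrow> int \<Rightarrow> cell set \<Rightarrow> bool" where
  "subdiagram a b D \<longleftrightarrow> D \<subseteq> Gset a b \<and>
     (\<forall>x y x' y'. (x, y) \<in> D \<longrightarrow> (x', y') \<in> Gset a b \<longrightarrow> x' \<le> x \<longrightarrow> y' \<le> y \<longrightarrow> (x', y') \<in> D)"

definition Kfun :: "int \<Rightarrow> int \<Rightarrow> int \<Rightarrow> int" where
  "Kfun a b d = (if d \<ge> 0 then 1 else 0) - (if d \<ge> a then 1 else 0)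
                 - (if d \<ge> b then 1 else 0) + (if d \<ge> a + b then 1 else 0)"

definition Qform :: "int \<Rightarrow> int \<Rightarrow> (cell \<Rightarrow> real) \<Rightarrow> real" where
  "Qform a b n = (\<Sum>i\<in>Gset a b. \<Sum>j\<in>Gset a b.
       real_of_int (Kfun a b (gval a b j - gval a b i)) * n i * n j)"

(* c - k a = k steps east, c - k b = k steps north *)
definition arm :: "cell set \<Rightarrow> cell \<Rightarrow> nat" where
  "arm D c = Max {k::nat. (fst c + int k, snd c) \<in> D}"

definition leg :: "cell set \<Rightarrow> cell \<Rightarrow> nat" where
  "leg D c = Max {k::nat. (fst c, snd c + int k) \<in> D}"

definition dinv :: "int \<Rightarrow> int \<Rightarrow> cell set \<Rightarrow> nat" where
  "dinv a b D = card {c \<in> D.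
      real (leg D c) / real (arm D c + 1) < real_of_int a / real_of_int b \<and>
      (arm D c = 0 \<or> real_of_int a / real_of_int b < real (leg D c + 1) / real (arm D c))}"

end

theory Submission
  imports Defs
begin

(* K(d) = H(d) - H(d - a) - H(d - b) + H(d - a - b), with H the Heaviside step, vanishes unless
   0 <= d < a + b, so K(g j - g i) can only be nonzero when one of i, j lies weakly northwest of
   the other.  Such a pair is (c + u east, c + t north) for a unique cell c of D with u <= arm and
   t <= leg, and then g j - g i = a u - b t.  Over the hook of c the kernel is a mixed second
   difference of H on a rectangle, so its sum telescopes to 1 - H(a m - b (l + 1)) - H(b l - a (m + 1))
   with m = arm and l = leg: the indicator of the dinv condition.  A cell of D with maximal x + y
   has arm = leg = 0 and always counts, whence positivity. *)

definition heaviside :: "int \<Rightarrow> int" where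
  "heaviside d = of_bool (0 \<le> d)"

lemma Kfun_heaviside:
  "Kfun a b d = heaviside d - heaviside (d - a) - heaviside (d - b) + heaviside (d - a - b)"
  unfolding Kfun_def heaviside_def by auto

lemma Kfun_eq_0_outside:
  assumes "d < 0 \<or> a + b \<le> d" "0 < a" "0 < b"
  shows "Kfun a b d = 0"
  using assms unfolding Kfun_def by auto

lemma sum_mixed_difference:
  fixes f :: "nat \<Rightarrow> nat \<Rightarrow> 'a::ab_group_add"
  shows "(\<Sum>t<l. \<Sum>u<m. f (Suc u) t - f u t - f (Suc u) (Suc t) + f u (Suc t))
           = f m 0 - f 0 0 - f m l + f 0 l"
proof -
  have "(\<Sum>u<m. f (Suc u) t - f u t - f (Suc u) (Suc t) + f u (Suc t))
          = (f m t - f 0 t) - (f m (Suc t) - f 0 (Suc t))" for t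
    using sum_lessThan_telescope[of "\<lambda>u. f u t - f u (Suc t)" m] by (simp add: algebra_simps)
  then have "(\<Sum>t<l. \<Sum>u<m. f (Suc u) t - f u t - f (Suc u) (Suc t) + f u (Suc t))
          = (\<Sum>t<l. (f m t - f 0 t) - (f m (Suc t) - f 0 (Suc t)))"
    by simp
  also have "\<dots> = (f m 0 - f 0 0) - (f m l - f 0 l)"
    by (rule sum_lessThan_telescope')
  finally show ?thesis by (simp add: algebra_simps)
qed

lemma sum_hook_Kfun:
  fixes a b :: int and l m :: nat
  assumes "0 < a" "0 < b"
  shows "(\<Sum>t\<le>l. \<Sum>u\<le>m. Kfun a b (a * int u - b * int t)
            + (if 0 < t then Kfun a b (b * int t - a * int u) else 0))
       = of_bool (b * int l < a * (int m + 1) \<and> a * int m < b * (int l + 1))"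
proof -
  have direct: "(\<Sum>t\<le>l. \<Sum>u\<le>m. Kfun a b (a * int u - b * int t))
                = 1 - heaviside (a * int m - b * (int l + 1))"
  proof -
    let ?f = "\<lambda>u t. heaviside (a * int u - a - b * int t)"
    have "0 \<le> b * int l"
      using assms by simp
    have "(\<Sum>t\<le>l. \<Sum>u\<le>m. Kfun a b (a * int u - b * int t))
            = (\<Sum>t<Suc l. \<Sum>u<Suc m. ?f (Suc u) t - ?f u t - ?f (Suc u) (Suc t) + ?f u (Suc t))"
      by (simp add: lessThan_Suc_atMost Kfun_heaviside algebra_simps)
    also have "\<dots> = ?f (Suc m) 0 - ?f 0 0 - ?f (Suc m) (Suc l) + ?f 0 (Suc l)"
      by (rule sum_mixed_difference)
    also have "\<dots> = 1 - heaviside (a * int m - b * (int l + 1))"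
      using assms by (simp add: heaviside_def algebra_simps) (use \<open>0 \<le> b * int l\<close> in linarith)
    finally show ?thesis .
  qed
  have swapped: "(\<Sum>t\<le>l. \<Sum>u\<le>m. if 0 < t then Kfun a b (b * int t - a * int u) else 0)
                 = - heaviside (b * int l - a * (int m + 1))"
  proof -
    let ?f = "\<lambda>u t. heaviside (b * int t - a * int u)"
    have "0 \<le> a * int m"
      using assms by simp
    have "(\<Sum>t\<le>l. \<Sum>u\<le>m. if 0 < t then Kfun a b (b * int t - a * int u) else 0)
            = (\<Sum>t<l. \<Sum>u\<le>m. Kfun a b (b * int (Suc t) - a * int u))"
      by (simp only: lessThan_Suc_atMost[symmetric] sum.lessThan_Suc_shift) simp
    also have "\<dots> = (\<Sum>t<l. \<Sum>u<Suc m. ?f (Suc u) t - ?f u t - ?f (Suc u) (Suc t) + ?f u (Suc t))"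
      by (simp add: lessThan_Suc_atMost Kfun_heaviside algebra_simps)
    also have "\<dots> = ?f (Suc m) 0 - ?f 0 0 - ?f (Suc m) l + ?f 0 l"
      by (rule sum_mixed_difference)
    also have "\<dots> = - heaviside (b * int l - a * (int m + 1))"
      using assms by (simp add: heaviside_def algebra_simps) (use \<open>0 \<le> a * int m\<close> in linarith)
    finally show ?thesis .
  qed
  have "\<not> (0 \<le> a * int m - b * (int l + 1) \<and> 0 \<le> b * int l - a * (int m + 1))"
    using assms by (simp add: algebra_simps)
  then show ?thesis
    by (auto simp: sum.distrib direct swapped heaviside_def)
qed

lemma Gset_bounds:
  assumes "(x, y) \<in> Gset a b" "0 < a" "0 < b"
  shows "1 \<le> x \<and> x < b \<and> 1 \<le> y \<and> y < a"
proof -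
  have x: "1 \<le> x" and y: "1 \<le> y" and g: "a * x + b * y < a * b"
    using assms(1) by (auto simp: Gset_def gval_def)
  have "0 < a * x" "0 < b * y"
    using assms(2,3) x y by simp_all
  then have "a * x < a * b" "b * y < b * a"
    using g by (simp_all add: mult.commute)
  then show ?thesis
    using assms(2,3) x y by simp
qed

lemma finite_Gset: "0 < a \<Longrightarrow> 0 < b \<Longrightarrow> finite (Gset a b)"
  by (rule finite_subset[of _ "{1..b} \<times> {1..a}"]) (auto dest: Gset_bounds)

lemma subdiagram_finite: "subdiagram a b D \<Longrightarrow> 0 < a \<Longrightarrow> 0 < b \<Longrightarrow> finite D"
  unfolding subdiagram_def using finite_Gset finite_subset by blast

lemma subdiagram_downward_closed:
  assumes "subdiagram a b D" "(x, y) \<in> D" "1 \<le> x'" "1 \<le> y'" "x' \<le> x" "y' \<le> y"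
    and "0 \<le> a" "0 \<le> b"
  shows "(x', y') \<in> D"
proof -
  have "a * x' + b * y' \<le> a * x + b * y"
    using assms(5-8) by (intro add_mono mult_left_mono)
  moreover have "(x, y) \<in> Gset a b"
    using assms(1,2) by (auto simp: subdiagram_def)
  ultimately have "(x', y') \<in> Gset a b"
    using assms(3,4) by (auto simp: Gset_def gval_def)
  then show ?thesis
    using assms(1-2,5-6) by (auto simp: subdiagram_def)
qed

lemma downward_closed_iff_le_Max:
  fixes P :: "nat \<Rightarrow> bool"
  assumes "finite {k. P k}" "P 0" "\<And>j k. P k \<Longrightarrow> j \<le> k \<Longrightarrow> P j"
  shows "P k \<longleftrightarrow> k \<le> Max {k. P k}"
proof
  assume "k \<le> Max {k. P k}"
  moreover have "P (Max {k. P k})"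
    using Max_in[OF assms(1)] assms(2) by blast
  ultimately show "P k"
    using assms(3) by blast
qed (use assms(1) in simp)

lemma subdiagram_mem_bounds:
  "subdiagram a b D \<Longrightarrow> (x, y) \<in> D \<Longrightarrow> 0 < a \<Longrightarrow> 0 < b \<Longrightarrow> 1 \<le> x \<and> 1 \<le> y"
  unfolding subdiagram_def using Gset_bounds by blast

lemma east_mem_iff_le_arm:
  assumes "subdiagram a b D" "c \<in> D" "0 < a" "0 < b"
  shows "(fst c + int u, snd c) \<in> D \<longleftrightarrow> u \<le> arm D c"
  unfolding arm_def
proof (rule downward_closed_iff_le_Max)
  show "finite {k. (fst c + int k, snd c) \<in> D}"
    using finite_vimageI[OF subdiagram_finite[OF assms(1,3,4)], of "\<lambda>k. (fst c + int k, snd c)"]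
    by (simp add: vimage_def inj_def)
  show "(fst c + int 0, snd c) \<in> D"
    using assms(2) by simp
  show "(fst c + int j, snd c) \<in> D" if "(fst c + int k, snd c) \<in> D" "j \<le> k" for j k
    using subdiagram_downward_closed[OF assms(1) that(1)] that(2)
      subdiagram_mem_bounds[of a b D "fst c" "snd c"] assms by simp
qed

lemma north_mem_iff_le_leg:
  assumes "subdiagram a b D" "c \<in> D" "0 < a" "0 < b"
  shows "(fst c, snd c + int t) \<in> D \<longleftrightarrow> t \<le> leg D c"
  unfolding leg_def
proof (rule downward_closed_iff_le_Max)
  show "finite {k. (fst c, snd c + int k) \<in> D}"
    using finite_vimageI[OF subdiagram_finite[OF assms(1,3,4)], of "\<lambda>k. (fst c, snd c + int k)"]
    by (simp add: vimage_def inj_def)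
  show "(fst c, snd c + int 0) \<in> D"
    using assms(2) by simp
  show "(fst c, snd c + int j) \<in> D" if "(fst c, snd c + int k) \<in> D" "j \<le> k" for j k
    using subdiagram_downward_closed[OF assms(1) that(1)] that(2)
      subdiagram_mem_bounds[of a b D "fst c" "snd c"] assms by simp
qed

lemma sum_northwest_pairs_eq_sum_hooks:
  assumes "subdiagram a b D" "0 < a" "0 < b"
  shows "(\<Sum>i\<in>D. \<Sum>j\<in>D. if fst j \<le> fst i \<and> snd i \<le> snd j then h i j else 0)
       = (\<Sum>c\<in>D. \<Sum>t\<le>leg D c. \<Sum>u\<le>arm D c. h (fst c + int u, snd c) (fst c, snd c + int t))"
proof -
  have fin: "finite D"
    using subdiagram_finite[OF assms] .
  let ?pairs = "{p \<in> D \<times> D. fst (snd p) \<le> fst (fst p) \<and> snd (fst p) \<le> snd (snd p)}"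
  let ?hooks = "SIGMA c:D. {..leg D c} \<times> {..arm D c}"
  have "(\<Sum>i\<in>D. \<Sum>j\<in>D. if fst j \<le> fst i \<and> snd i \<le> snd j then h i j else 0)
          = (\<Sum>p\<in>?pairs. h (fst p) (snd p))"
    using fin by (simp add: sum.cartesian_product sum.inter_filter case_prod_beta)
  also have "\<dots> = (\<Sum>(c, t, u)\<in>?hooks. h (fst c + int u, snd c) (fst c, snd c + int t))"
  proof (rule sum.reindex_bij_witness
      [where j = "\<lambda>(i, j). ((fst j, snd i), nat (snd j - snd i), nat (fst i - fst j))"
         and i = "\<lambda>(c, t, u). ((fst c + int u, snd c), (fst c, snd c + int t))"])
    fix p assume "p \<in> ?pairs"
    then obtain i j where p: "p = (i, j)" "i \<in> D" "j \<in> D" "fst j \<le> fst i" "snd i \<le> snd j"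
      by auto
    have "1 \<le> fst j" "1 \<le> snd i"
      using subdiagram_mem_bounds[OF assms(1) _ assms(2,3)] p(2,3) by (metis prod.collapse)+
    then have c: "(fst j, snd i) \<in> D"
      using subdiagram_downward_closed[OF assms(1), of "fst i" "snd i"] p assms(2,3) by simp
    show "(\<lambda>(i, j). ((fst j, snd i), nat (snd j - snd i), nat (fst i - fst j))) p \<in> ?hooks"
      using c p east_mem_iff_le_arm[OF assms(1) c assms(2,3), of "nat (fst i - fst j)"]
        north_mem_iff_le_leg[OF assms(1) c assms(2,3), of "nat (snd j - snd i)"]
      by simp
  next
    fix q assume "q \<in> ?hooks"
    then obtain c t u where q: "q = (c, t, u)" "c \<in> D" "t \<le> leg D c" "u \<le> arm D c"
      by auto
    then show "(\<lambda>(c, t, u). ((fst c + int u, snd c), (fst c, snd c + int t))) q \<in> ?pairs"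
      using east_mem_iff_le_arm[OF assms(1) q(2) assms(2,3)]
        north_mem_iff_le_leg[OF assms(1) q(2) assms(2,3)]
      by simp
  qed auto
  also have "\<dots> = (\<Sum>c\<in>D. \<Sum>t\<le>leg D c. \<Sum>u\<le>arm D c. h (fst c + int u, snd c) (fst c, snd c + int t))"
    using fin by (simp add: sum.Sigma sum.cartesian_product)
  finally show ?thesis .
qed

lemma Kfun_eq_0_if_same_sign:
  fixes p q :: int
  assumes "p < 0 \<and> q \<le> 0 \<or> 0 < p \<and> 0 < q" "0 < a" "0 < b"
  shows "Kfun a b (a * p + b * q) = 0"
proof (rule Kfun_eq_0_outside)
  show "a * p + b * q < 0 \<or> a + b \<le> a * p + b * q"
    using assms(1)
  proof
    assume "p < 0 \<and> q \<le> 0"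
    then have "a * p \<le> - a" "b * q \<le> 0"
      using assms(2,3) mult_left_mono[of p "-1" a] by (simp_all add: mult_nonneg_nonpos)
    then show ?thesis using assms(2) by linarith
  next
    assume "0 < p \<and> 0 < q"
    then have "a \<le> a * p" "b \<le> b * q"
      using assms(2,3) mult_left_mono[of 1 p a] mult_left_mono[of 1 q b] by simp_all
    then show ?thesis by linarith
  qed
qed (use assms in auto)

lemma sum_Kfun_pairs_eq_sum_hooks:
  assumes "subdiagram a b D" "0 < a" "0 < b"
  shows "(\<Sum>i\<in>D. \<Sum>j\<in>D. Kfun a b (gval a b j - gval a b i))
       = (\<Sum>c\<in>D. \<Sum>t\<le>leg D c. \<Sum>u\<le>arm D c. Kfun a b (a * int u - b * int t)
            + (if 0 < t then Kfun a b (b * int t - a * int u) else 0))"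
proof -
  define K where "K i j = Kfun a b (gval a b j - gval a b i)" for i j
  define nw where "nw i j \<longleftrightarrow> fst j \<le> fst i \<and> snd i \<le> snd j" for i j :: cell
  have K_split: "K i j = (if nw i j then K i j else 0)
                       + (if nw j i \<and> snd j < snd i then K i j else 0)" for i j
  proof -
    have "gval a b j - gval a b i = a * (fst i - fst j) + b * (snd i - snd j)"
      by (simp add: gval_def algebra_simps)
    then have "K i j = 0" if "\<not> nw i j" "\<not> (nw j i \<and> snd j < snd i)"
      using that Kfun_eq_0_if_same_sign[OF _ assms(2,3), of "fst i - fst j" "snd i - snd j"]
      unfolding K_def nw_def by fastforce
    then show ?thesis by (auto simp: nw_def)
  qed
  have "(\<Sum>i\<in>D. \<Sum>j\<in>D. K i j)
          = (\<Sum>i\<in>D. \<Sum>j\<in>D. if nw i j then K i j else 0)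
          + (\<Sum>i\<in>D. \<Sum>j\<in>D. if nw j i \<and> snd j < snd i then K i j else 0)"
    by (subst K_split) (simp add: sum.distrib)
  also have "(\<Sum>i\<in>D. \<Sum>j\<in>D. if nw j i \<and> snd j < snd i then K i j else 0)
          = (\<Sum>i\<in>D. \<Sum>j\<in>D. if nw i j then (if snd i < snd j then K j i else 0) else 0)"
    by (subst sum.swap) (auto intro!: sum.cong)
  also have "(\<Sum>i\<in>D. \<Sum>j\<in>D. if nw i j then K i j else 0) + \<dots>
          = (\<Sum>i\<in>D. \<Sum>j\<in>D. if nw i j then K i j + (if snd i < snd j then K j i else 0) else 0)"
    by (simp add: sum.distrib[symmetric]) (intro sum.cong; simp)
  also have "\<dots> = (\<Sum>c\<in>D. \<Sum>t\<le>leg D c. \<Sum>u\<le>arm D c. Kfun a b (a * int u - b * int t)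
            + (if 0 < t then Kfun a b (b * int t - a * int u) else 0))"
  proof -
    have hook_K: "K (fst c + int u, snd c) (fst c, snd c + int t) = Kfun a b (a * int u - b * int t)"
                 "K (fst c, snd c + int t) (fst c + int u, snd c) = Kfun a b (b * int t - a * int u)"
      for c :: cell and t u :: nat
      by (simp_all add: K_def gval_def algebra_simps)
    show ?thesis
      unfolding nw_def sum_northwest_pairs_eq_sum_hooks[OF assms] snd_conv hook_K
      by simp
  qed
  finally show ?thesis unfolding K_def .
qed

lemma Qform_indicator:
  assumes "D \<subseteq> Gset a b" "finite (Gset a b)"
  shows "Qform a b (indicator D)
       = (\<Sum>i\<in>D. \<Sum>j\<in>D. real_of_int (Kfun a b (gval a b j - gval a b i)))"
proof -
  let ?k = "\<lambda>i j. real_of_int (Kfun a b (gval a b j - gval a b i))"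
  have D: "Gset a b \<inter> {x. x \<in> D} = D"
    using assms(1) by blast
  have "Qform a b (indicator D) = (\<Sum>i\<in>Gset a b. \<Sum>j\<in>Gset a b. ?k i j * of_bool (i \<in> D) * of_bool (j \<in> D))"
    by (simp add: Qform_def indicator_def)
  also have "\<dots> = (\<Sum>i\<in>Gset a b. (\<Sum>j\<in>D. ?k i j) * of_bool (i \<in> D))"
    by (simp only: sum_mult_of_bool_eq[OF assms(2)] D sum_distrib_right)
  also have "\<dots> = (\<Sum>i\<in>D. \<Sum>j\<in>D. ?k i j)"
    by (simp only: sum_mult_of_bool_eq[OF assms(2)] D)
  finally show ?thesis .
qed

lemma dinv_condition_iff:
  fixes l m :: nat
  assumes "0 < a" "0 < b"
  shows "(real l / real (m + 1) < real_of_int a / real_of_int b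
            \<and> (m = 0 \<or> real_of_int a / real_of_int b < real (l + 1) / real m))
       \<longleftrightarrow> b * int l < a * (int m + 1) \<and> a * int m < b * (int l + 1)"
proof -
  have "real l / real (m + 1) < real_of_int a / real_of_int b
          \<longleftrightarrow> real_of_int (b * int l) < real_of_int (a * (int m + 1))"
    using assms by (simp add: field_simps)
  moreover have "real_of_int a / real_of_int b < real (l + 1) / real m
          \<longleftrightarrow> real_of_int (a * int m) < real_of_int (b * (int l + 1))" if "0 < m"
    using assms that by (simp add: field_simps)
  moreover have "a * int m < b * (int l + 1)" if "m = 0"
    using assms that by simp
  ultimately show ?thesis
    unfolding of_int_less_iff by blast
qed

lemma dinv_eq_card:
  assumes "0 < a" "0 < b"
  shows "dinv a b D = card {c \<in> D. b * int (leg D c) < a * (int (arm D c) + 1)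
                                   \<and> a * int (arm D c) < b * (int (leg D c) + 1)}"
  unfolding dinv_def dinv_condition_iff[OF assms] ..

lemma Qform_indicator_eq_dinv:
  assumes "subdiagram a b D" "0 < a" "0 < b"
  shows "Qform a b (indicator D) = real (dinv a b D)"
proof -
  have "Qform a b (indicator D) = real_of_int (\<Sum>i\<in>D. \<Sum>j\<in>D. Kfun a b (gval a b j - gval a b i))"
    using assms Qform_indicator finite_Gset by (simp add: subdiagram_def)
  also have "\<dots> = real_of_int (\<Sum>c\<in>D. of_bool (b * int (leg D c) < a * (int (arm D c) + 1)
                                   \<and> a * int (arm D c) < b * (int (leg D c) + 1)))"
    by (simp add: sum_Kfun_pairs_eq_sum_hooks[OF assms] sum_hook_Kfun[OF assms(2,3)])
  also have "\<dots> = real (dinv a b D)"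
    using subdiagram_finite[OF assms] by (simp add: dinv_eq_card[OF assms(2,3)] Int_def)
  finally show ?thesis .
qed

lemma dinv_pos:
  assumes "subdiagram a b D" "D \<noteq> {}" "0 < a" "0 < b"
  shows "0 < dinv a b D"
proof -
  have fin: "finite D"
    using subdiagram_finite[OF assms(1,3,4)] .
  obtain c where "is_arg_min (\<lambda>d. - (fst d + snd d)) (\<lambda>d. d \<in> D) c"
    using ex_is_arg_min_if_finite[OF fin assms(2)] by blast
  then have c: "c \<in> D" and max: "\<And>d. d \<in> D \<Longrightarrow> fst d + snd d \<le> fst c + snd c"
    unfolding is_arg_min_linorder by (meson neg_le_iff_le)+
  have "arm D c = 0"
    using east_mem_iff_le_arm[OF assms(1) c assms(3,4), of 1] max[of "(fst c + 1, snd c)"] by auto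
  moreover have "leg D c = 0"
    using north_mem_iff_le_leg[OF assms(1) c assms(3,4), of 1] max[of "(fst c, snd c + 1)"] by auto
  ultimately have "c \<in> {c \<in> D. b * int (leg D c) < a * (int (arm D c) + 1)
                                   \<and> a * int (arm D c) < b * (int (leg D c) + 1)}"
    (is "c \<in> ?S") using c assms(3,4) by simp
  moreover have "finite ?S"
    using fin by simp
  ultimately show ?thesis
    unfolding dinv_eq_card[OF assms(3,4)] card_gt_0_iff by blast
qed

theorem theorem1p1:
  fixes a b :: int and D :: "cell set"
  assumes "1 < a" and "a < b" and "coprime a b"
    and "subdiagram a b D"
  shows "Qform a b (indicator D) = real (dinv a b D) \<and>
         (D \<noteq> {} \<longrightarrow> Qform a b (indicator D) > 0)"
proof -
  have pos: "0 < a" "0 < b"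
    using assms(1,2) by linarith+
  have Q: "Qform a b (indicator D) = real (dinv a b D)"
    using Qform_indicator_eq_dinv[OF assms(4) pos] .
  moreover have "0 < dinv a b D" if "D \<noteq> {}"
    using dinv_pos[OF assms(4) that pos] .
  ultimately show ?thesis
    by simp
qed

end
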